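(* Fix an alphabet $\Sigma=\{a_1,\dots,a_\sigma\}$ with $\sigma\ge 1$. Then: (i) every word of length $n$ over $\Sigma$ has at most $n^2$ distinct Abelian periods; (ii) for every $n\ge 1$ divisible by $\sigma$, the word $w=(a_1a_2\cdots a_\sigma)^{n/\sigma}$ has Abelian period $(h,p)$ for every integer $p$ with $1\le p\le n$ and $p\equiv 0 \pmod{\sigma}$ and every integer $h$ with $0\le h\le \min(p-1,\,n-p)$. Consequently there is a constant $c>0$ depending only on $\sigma$ such that, for every $n$ divisible by $\sigma$, this word has at least $c\,n^2$ distinct Abelian periods. Hence the maximum number of Abelian periods of a word of length $n$ over $\Sigma$ is $\Theta(n^2)$.
   Context: Words are finite sequences over a finite alphabet $\Sigma=\{a_1,\dots,a_\sigma\}$; positions are numbered from $1$, $w[i]$ is the $i$-th letter and $|w|$ the length. For a word $u$, its Parikh vector is $\mathcal{P}_u=(|u|_{a_1},\dots,|u|_{a_\sigma})$, where $|u|_a$ is the number of occurrences of the letter $a$ in $u$; its norm is $|\mathcal{P}_u|=\sum_i \mathcal{P}_u[i]=|u|$. For Parikh vectors $\mathcal{P},\mathcal{Q}$ write $\mathcal{P}\subset\mathcal{Q}$ if $\mathcal{P}[i]\le\mathcal{Q}[i]$ for all $1\le i\le\sigma$ and $|\mathcal{P}|<|\mathcal{Q}|$ (and $\mathcal{Q}\supset\mathcal{P}$ means the same). A word $w$ has Abelian period $(h,p)$ (integers $h\ge0$, $p\ge1$) if $w=u_0u_1\cdots u_{k-1}u_k$ for some $k\ge 2$ and words $u_0,\dots,u_k$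 (where $u_0$ and $u_k$ may be empty) with $|u_0|=h$, $|u_1|=p$ and $\mathcal{P}_{u_0}\subset\mathcal{P}_{u_1}=\mathcal{P}_{u_2}=\cdots=\mathcal{P}_{u_{k-1}}\supset\mathcal{P}_{u_k}$. Two Abelian periods are distinct if they are distinct pairs $(h,p)$. *)

theory Defs
  imports Complex_Main
begin

definition parikh :: "'a list \<Rightarrow> 'a \<Rightarrow> nat" where
  "parikh u = (\<lambda>a. count_list u a)"

definition parikh_sub :: "'a list \<Rightarrow> 'a list \<Rightarrow> bool" where
  "parikh_sub u v \<longleftrightarrow> (\<forall>a. parikh u a \<le> parikh v a) \<and> length u < length v"

definition abelian_period :: "'a list \<Rightarrow> nat \<Rightarrow> nat \<Rightarrow> bool" where
  "abelian_period w h p \<longleftrightarrow> p \<ge> 1 \<and>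
     (\<exists>us k. length us = Suc k \<and> k \<ge> 2 \<and> concat us = w \<and>
        length (us ! 0) = h \<and> length (us ! 1) = p \<and>
        parikh_sub (us ! 0) (us ! 1) \<and>
        (\<forall>i\<in>{1..k-1}. parikh (us ! i) = parikh (us ! 1)) \<and>
        parikh_sub (us ! k) (us ! 1))"

definition abelian_periods :: "'a list \<Rightarrow> (nat \<times> nat) set" where
  "abelian_periods w = {(h, p). abelian_period w h p}"

end

theory Submission
  imports Defs
begin

(* If (h,p) is an Abelian period of w then h < p \<le> |w|, since
        |u_0| < |u_1| and u_1 is a factor of w.  Hence the Abelian periods of w lie
        in {0..<|w|} \<times> {1..|w|}, a set of |w|^2 pairs.
   (ii) A general criterion: if all factors of length p of w share one Parikh
        vector, then (h,p) is an Abelian period of w whenever h < p and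
        h + p \<le> |w|.  Cut w into the prefix of length h, as many blocks of length
        p as fit, and a remainder shorter than p; the prefix is a prefix of the
        first length-p window, the remainder a suffix of the last one.  In the
        word (a_1...a_\<sigma>)^N every factor whose length is a multiple j\<sigma> of \<sigma> is
        j copies of a rotation of a_1...a_\<sigma>, so the criterion applies to every p
        divisible by \<sigma>.
   (iii) Lower bound.  With K = \<lceil>N/4\<rceil>, the pairs (h, t\<sigma>) with h < K \<le> t < 2K
        all satisfy the criterion, giving K^2 \<ge> N^2/16 = n^2/(16\<sigma>^2) periods. *)

section \<open>Basic facts on Parikh vectors and Abelian periods\<close>

text \<open>A proper prefix and a proper suffix of a word have Parikh vectors \<open>\<subset>\<close> that of
  the word; these produce the head \<open>u\<^sub>0\<close> and the tail \<open>u\<^sub>k\<close> of a factorisation.\<close>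

lemma count_list_take_le: "count_list (take k v) a \<le> count_list v a"
  by (metis append_take_drop_id count_list_append le_add1)

lemma count_list_drop_le: "count_list (drop k v) a \<le> count_list v a"
  by (metis append_take_drop_id count_list_append le_add2)

lemma parikh_sub_take:
  assumes "h < length v"
  shows "parikh_sub (take h v) v"
  unfolding parikh_sub_def parikh_def using assms by (simp add: count_list_take_le)

lemma parikh_sub_drop:
  assumes "0 < d" "d \<le> length v"
  shows "parikh_sub (drop d v) v"
  unfolding parikh_sub_def parikh_def using assms by (simp add: count_list_drop_le)

lemma parikh_sub_cong:
  "parikh_sub u v \<Longrightarrow> parikh v = parikh v' \<Longrightarrow> length v = length v' \<Longrightarrow> parikh_sub u v'"
  unfolding parikh_sub_def by simp

lemma abelian_period_bounds:
  assumes "abelian_period w h p"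
  shows "h < p" and "p \<le> length w"
proof -
  from assms obtain us k where "length us = Suc k" "k \<ge> 2" "concat us = w"
    and len0: "length (us ! 0) = h" and len1: "length (us ! 1) = p"
    and sub: "parikh_sub (us ! 0) (us ! 1)"
    unfolding abelian_period_def by blast
  show "h < p" using sub len0 len1 unfolding parikh_sub_def by simp
  have "us ! 1 \<in> set us" using \<open>length us = Suc k\<close> \<open>k \<ge> 2\<close> by simp
  then have "length (us ! 1) \<le> sum_list (map length us)"
    by (intro member_le_sum_list) auto
  moreover have "length w = sum_list (map length us)"
    using \<open>concat us = w\<close> by (metis length_concat)
  ultimately show "p \<le> length w" using len1 by simp
qed

lemma abelian_periods_subset: "abelian_periods w \<subseteq> {0..<length w} \<times> {1..length w}"
proof
  fix x
  assume "x \<in> abelian_periods w"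
  then obtain h p where x: "x = (h, p)" and period: "abelian_period w h p"
    by (auto simp: abelian_periods_def)
  then have "1 \<le> p" by (simp add: abelian_period_def)
  with x show "x \<in> {0..<length w} \<times> {1..length w}"
    using abelian_period_bounds[OF period] by auto
qed

lemma finite_abelian_periods: "finite (abelian_periods w)"
  by (rule finite_subset[OF abelian_periods_subset]) simp

theorem card_abelian_periods_le: "card (abelian_periods w) \<le> (length w)\<^sup>2"
proof -
  have "card (abelian_periods w) \<le> card ({0..<length w} \<times> {1..length w})"
    by (intro card_mono abelian_periods_subset) simp
  then show ?thesis by (simp add: power2_eq_square)
qed

section \<open>Abelian periods of words with constant windows\<close>

lemma concat_blocks:
  "m * p \<le> length x \<Longrightarrow> concat (map (\<lambda>t. take p (drop (t * p) x)) [0..<m]) @ drop (m * p) x = x"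
proof (induction m)
  case 0
  then show ?case by simp
next
  case (Suc m)
  have "take p (drop (m * p) x) @ drop (Suc m * p) x = drop (m * p) x"
    by (metis append_take_drop_id drop_drop mult_Suc)
  with Suc show ?case by simp
qed

theorem abelian_period_of_constant_windows:
  assumes p: "1 \<le> p" and h: "h < p" "h + p \<le> length w"
    and windows: "\<And>i. i + p \<le> length w \<Longrightarrow> parikh (take p (drop i w)) = P"
  shows "abelian_period w h p"
proof -
  define n where "n = length w"
  define m where "m = (n - h) div p"
  define blk where "blk = (\<lambda>t. take p (drop (t * p) (drop h w)))"
  define us where "us = take h w # map blk [0..<m] @ [drop (m * p) (drop h w)]"
  have "p div p \<le> (n - h) div p" using h by (intro div_le_mono) (simp add: n_def)
  then have "1 \<le> m" using p by (simp add: m_def)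
  have fit: "m * p \<le> n - h" by (simp add: m_def)
  have rest_short: "n - h - m * p < p"
    using p by (simp add: m_def minus_div_mult_eq_mod)
  have "concat (map blk [0..<m]) @ drop (m * p) (drop h w) = drop h w"
    unfolding blk_def using fit by (intro concat_blocks) (simp add: n_def)
  then have concat_us: "concat us = w" by (simp add: us_def)
  have length_us: "length us = Suc (Suc m)" by (simp add: us_def)
  have us_blk: "us ! i = blk (i - 1)" if "1 \<le> i" "i \<le> m" for i
    using that by (cases i) (auto simp: us_def nth_append)
  have us_last: "us ! Suc m = drop (m * p) (drop h w)" by (simp add: us_def nth_append)
  have parikh_blk: "parikh (blk t) = P" if "t < m" for t
  proof -
    have "Suc t * p \<le> m * p" using that by (intro mult_le_mono1) simp
    then have "t * p + p \<le> m * p" by simp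
    then have "h + t * p + p \<le> length w" using fit h unfolding n_def by linarith
    then show ?thesis using windows[of "h + t * p"] by (simp add: blk_def add.commute)
  qed
  have us1: "us ! 1 = blk 0" using us_blk[of 1] \<open>1 \<le> m\<close> by simp
  have length_us1: "length (us ! 1) = p" using us1 h by (simp add: blk_def)
  have parikh_us1: "parikh (us ! 1) = P" using us1 parikh_blk \<open>1 \<le> m\<close> by simp
  have head: "parikh_sub (us ! 0) (us ! 1)"
  proof -
    have "parikh_sub (take h (take p w)) (take p w)" using h by (intro parikh_sub_take) simp
    moreover have "take h (take p w) = us ! 0" using h by (simp add: us_def min_def)
    moreover have "parikh (take p w) = P" using windows[of 0] h by simp
    moreover have "length (take p w) = p" using h by simp
    ultimately show ?thesis using parikh_us1 length_us1 by (metis parikh_sub_cong)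
  qed
  have tail: "parikh_sub (us ! Suc m) (us ! 1)"
  proof -
    let ?v = "drop (n - p) w"
    have "us ! Suc m = drop (h + m * p - (n - p)) ?v"
      using us_last rest_short fit by (simp add: add.commute)
    moreover have "parikh_sub (drop (h + m * p - (n - p)) ?v) ?v"
      using rest_short fit h by (intro parikh_sub_drop) (auto simp: n_def)
    moreover have "parikh ?v = P" using windows[of "n - p"] h by (simp add: n_def)
    moreover have "length ?v = p" using h by (simp add: n_def)
    ultimately show ?thesis
      using parikh_us1 length_us1 by (metis parikh_sub_cong)
  qed
  have middle: "\<forall>i\<in>{1..Suc m - 1}. parikh (us ! i) = parikh (us ! 1)"
  proof
    fix i
    assume "i \<in> {1..Suc m - 1}"
    then have "parikh (us ! i) = P" using us_blk[of i] parikh_blk[of "i - 1"] by auto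
    then show "parikh (us ! i) = parikh (us ! 1)" using parikh_us1 by simp
  qed
  have "length (us ! 0) = h" using h by (simp add: us_def)
  moreover have "2 \<le> Suc m" using \<open>1 \<le> m\<close> by simp
  ultimately show ?thesis
    unfolding abelian_period_def
    using p length_us concat_us length_us1 head middle tail by blast
qed

section \<open>Windows of the word \<open>(a\<^sub>1\<dots>a\<^sub>\<sigma>)\<^sup>N\<close>\<close>

lemma nth_concat_replicate:
  "t < j * length xs \<Longrightarrow> concat (replicate j xs) ! t = xs ! (t mod length xs)"
proof (induction j arbitrary: t)
  case 0
  then show ?case by simp
next
  case (Suc j)
  show ?case
  proof (cases "t < length xs")
    case True
    then show ?thesis by (simp add: nth_append)
  next
    case False
    with Suc show ?thesis by (simp add: nth_append le_mod_geq)
  qed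
qed

lemma length_concat_replicate: "length (concat (replicate j xs)) = j * length xs"
  by (simp add: length_concat sum_list_replicate)

lemma factor_of_power:
  assumes "xs \<noteq> []" "i + j * length xs \<le> N * length xs"
  shows "take (j * length xs) (drop i (concat (replicate N xs)))
           = concat (replicate j (rotate (i mod length xs) xs))"
proof (rule nth_equalityI)
  show "length (take (j * length xs) (drop i (concat (replicate N xs))))
        = length (concat (replicate j (rotate (i mod length xs) xs)))"
    using assms by (simp add: length_concat_replicate)
next
  fix t
  assume "t < length (take (j * length xs) (drop i (concat (replicate N xs))))"
  then have t: "t < j * length xs" "i + t < N * length xs"
    using assms by (auto simp: length_concat_replicate)
  then show "take (j * length xs) (drop i (concat (replicate N xs))) ! t
             = concat (replicate j (rotate (i mod length xs) xs)) ! t"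
    using assms by (simp add: nth_concat_replicate length_concat_replicate nth_rotate
        mod_add_eq add.commute)
qed

lemma count_list_concat_replicate:
  "count_list (concat (replicate j xs)) a = j * count_list xs a"
  by (induction j) auto

lemma count_list_rotate: "count_list (rotate r xs) a = count_list xs a"
  by (metis add.commute append_take_drop_id count_list_append rotate_drop_take)

lemma parikh_factor_of_power:
  assumes "xs \<noteq> []" "i + j * length xs \<le> N * length xs"
  shows "parikh (take (j * length xs) (drop i (concat (replicate N xs))))
           = (\<lambda>a. j * count_list xs a)"
  using factor_of_power[OF assms]
  by (simp add: parikh_def count_list_concat_replicate count_list_rotate)

theorem abelian_period_of_power:
  assumes "xs \<noteq> []" "1 \<le> p" "length xs dvd p" "h < p" "h + p \<le> N * length xs"
  shows "abelian_period (concat (replicate N xs)) h p"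
proof -
  obtain j where p: "p = j * length xs" using \<open>length xs dvd p\<close> by (metis dvdE mult.commute)
  show ?thesis
  proof (rule abelian_period_of_constant_windows)
    fix i
    assume "i + p \<le> length (concat (replicate N xs))"
    then show "parikh (take p (drop i (concat (replicate N xs)))) = (\<lambda>a. j * count_list xs a)"
      using parikh_factor_of_power[OF \<open>xs \<noteq> []\<close>] p by (simp add: length_concat_replicate)
  qed (use assms in \<open>simp_all add: length_concat_replicate\<close>)
qed

corollary abelian_period_of_power_length:
  assumes "xs \<noteq> []" "length xs dvd n" "1 \<le> p" "p \<le> n" "length xs dvd p"
    and "h \<le> min (p - 1) (n - p)"
  shows "abelian_period (concat (replicate (n div length xs) xs)) h p"
proof (rule abelian_period_of_power)
  have "h + p \<le> n" using assms(4,6) by arith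
  then show "h + p \<le> n div length xs * length xs" using assms(2) by simp
qed (use assms in auto)

section \<open>Quadratically many Abelian periods\<close>

text \<open>With \<open>K = \<lceil>N/4\<rceil>\<close>, the \<open>K\<^sup>2\<close> pairs \<open>(h, t\<sigma>)\<close> with \<open>h < K \<le> t < 2K\<close> are
  Abelian periods of \<open>(a\<^sub>1\<dots>a\<^sub>\<sigma>)\<^sup>N\<close>.\<close>

lemma card_abelian_periods_of_power:
  assumes ne: "xs \<noteq> []"
  shows "((N + 3) div 4)\<^sup>2 \<le> card (abelian_periods (concat (replicate N xs)))"
proof -
  define K where "K = (N + 3) div 4"
  define s where "s = length xs"
  define A where "A = {0..<K} \<times> {K..<2 * K}"
  define f :: "nat \<times> nat \<Rightarrow> nat \<times> nat" where "f = (\<lambda>(h, t). (h, t * s))"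
  have s: "1 \<le> s" using ne by (simp add: s_def Suc_le_eq)
  have periods: "(h, t * s) \<in> abelian_periods (concat (replicate N xs))"
    if "(h, t) \<in> A" for h t
  proof -
    from that have h: "h < K" and t: "K \<le> t" "t < 2 * K" by (auto simp: A_def)
    have "4 * K \<le> N + 3" by (simp add: K_def)
    then have "h + t \<le> N" using h t by linarith
    have "h \<le> h * s" "t \<le> t * s" using s by simp_all
    have "h + t * s \<le> (h + t) * s" using \<open>h \<le> h * s\<close> by (simp add: add_mult_distrib)
    also have "\<dots> \<le> N * s" using \<open>h + t \<le> N\<close> by (rule mult_le_mono1)
    finally have "h + t * s \<le> N * s" .
    moreover have "h < t * s" using h t \<open>t \<le> t * s\<close> by linarith
    ultimately have "abelian_period (concat (replicate N xs)) h (t * s)"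
      using h t s by (intro abelian_period_of_power ne) (auto simp: s_def)
    then show ?thesis by (simp add: abelian_periods_def)
  qed
  have "f ` A \<subseteq> abelian_periods (concat (replicate N xs))"
    using periods by (auto simp: f_def)
  moreover have "inj_on f A" using s by (auto simp: inj_on_def f_def)
  ultimately have "card A \<le> card (abelian_periods (concat (replicate N xs)))"
    using card_mono[OF finite_abelian_periods] card_image by metis
  then show ?thesis by (simp add: A_def K_def power2_eq_square)
qed

corollary card_abelian_periods_of_power_real:
  assumes ne: "xs \<noteq> []" and dvd: "length xs dvd n"
  shows "1 / (16 * (real (length xs))\<^sup>2) * (real n)\<^sup>2
           \<le> real (card (abelian_periods (concat (replicate (n div length xs) xs))))"
proof -
  define N where "N = n div length xs"
  define K where "K = (N + 3) div 4"
  have "real N \<le> 4 * real K" unfolding K_def by linarith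
  then have "(real N)\<^sup>2 \<le> (4 * real K)\<^sup>2" by (rule power_mono) simp
  also have "\<dots> = 16 * real (K\<^sup>2)" by (simp add: power_mult_distrib)
  also have "\<dots> \<le> 16 * real (card (abelian_periods (concat (replicate N xs))))"
    using card_abelian_periods_of_power[OF ne, of N] by (simp add: K_def)
  finally have N_bound: "(real N)\<^sup>2 / 16 \<le> real (card (abelian_periods (concat (replicate N xs))))"
    by simp
  have "n = N * length xs" using dvd by (simp add: N_def)
  then have "1 / (16 * (real (length xs))\<^sup>2) * (real n)\<^sup>2 = (real N)\<^sup>2 / 16"
    using ne by (simp add: power_mult_distrib)
  with N_bound show ?thesis by (simp add: N_def)
qed

theorem lemma1:
  fixes as :: "'a list"
  assumes "distinct as" and "length as \<ge> 1"
  shows "(\<forall>w. set w \<subseteq> set as \<longrightarrow> card (abelian_periods w) \<le> (length w)\<^sup>2)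
       \<and> (\<forall>n. n \<ge> 1 \<and> length as dvd n \<longrightarrow>
            (\<forall>p h. 1 \<le> p \<and> p \<le> n \<and> length as dvd p \<and> h \<le> min (p - 1) (n - p) \<longrightarrow>
               abelian_period (concat (replicate (n div length as) as)) h p))
       \<and> (\<exists>c::real. c > 0 \<and> (\<forall>n. length as dvd n \<longrightarrow>
            real (card (abelian_periods (concat (replicate (n div length as) as))))
              \<ge> c * (real n)\<^sup>2))"
proof (intro conjI)
  have ne: "as \<noteq> []" using assms(2) by auto
  show "\<forall>w. set w \<subseteq> set as \<longrightarrow> card (abelian_periods w) \<le> (length w)\<^sup>2"
    using card_abelian_periods_le by blast
  show "\<forall>n. n \<ge> 1 \<and> length as dvd n \<longrightarrow>
      (\<forall>p h. 1 \<le> p \<and> p \<le> n \<and> length as dvd p \<and> h \<le> min (p - 1) (n - p) \<longrightarrow>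
         abelian_period (concat (replicate (n div length as) as)) h p)"
    using abelian_period_of_power_length[OF ne] by blast
  show "\<exists>c::real. c > 0 \<and> (\<forall>n. length as dvd n \<longrightarrow>
      real (card (abelian_periods (concat (replicate (n div length as) as)))) \<ge> c * (real n)\<^sup>2)"
  proof (intro exI conjI allI impI)
    show "1 / (16 * (real (length as))\<^sup>2) > 0" using ne by simp
  qed (rule card_abelian_periods_of_power_real[OF ne])
qed

end
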